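(* Let $A_1,\ldots,A_n$ be events in a probability space, let $X$ be the number of these events that occur, and for $1\le j\le n$ let $S_j=\sum_{1\le i_1<\cdots<i_j\le n}P(A_{i_1}\cdots A_{i_j})$. Let $k$ be an integer with $1\le k<n$. For distinct indices $i_1,\ldots,i_k\in\{1,\ldots,n\}$ and $1\le s\le n-k$, let $W_s(i_1,\ldots,i_k)$ be the $s$-th largest of the $n-k$ values $P(A_{i_1}\cdots A_{i_k}A_j)$, $j\in\{1,\ldots,n\}\setminus\{i_1,\ldots,i_k\}$ (counted with multiplicity). Let $$V=\sum_{1\le r_1<\cdots<r_k\le n}\ \sum_{s=1}^{n-k}W_s(r_1,\ldots,r_k)\frac{k}{(k+s)(k+s-1)}.$$ If $k$ is even then $P(X\ge 1)\ge\sum_{j=1}^{k}(-1)^{j+1}S_j+V$, and if $k$ is odd then $P(X\ge 1)\le\sum_{j=1}^{k}(-1)^{j+1}S_j-V$.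
   Context: $A_{i_1}\cdots A_{i_j}$ denotes the intersection of the events. *)

theory Defs
  imports "HOL-Probability.Probability"
begin

definition inter_ev :: "(nat \<Rightarrow> 'a set) \<Rightarrow> nat set \<Rightarrow> 'a set" where
  "inter_ev A I = (\<Inter>i\<in>I. A i)"

definition S_sum :: "'a measure \<Rightarrow> (nat \<Rightarrow> 'a set) \<Rightarrow> nat \<Rightarrow> nat \<Rightarrow> real" where
  "S_sum M A n j = (\<Sum>J\<in>{J. J \<subseteq> {1..n} \<and> card J = j}. measure M (inter_ev A J))"

definition num_occ :: "(nat \<Rightarrow> 'a set) \<Rightarrow> nat \<Rightarrow> 'a \<Rightarrow> nat" where
  "num_occ A n w = card {i\<in>{1..n}. w \<in> A i}"

definition W_val :: "'a measure \<Rightarrow> (nat \<Rightarrow> 'a set) \<Rightarrow> nat \<Rightarrow> nat set \<Rightarrow> nat \<Rightarrow> real" where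
  "W_val M A n I s =
     rev (sort (map (\<lambda>j. measure M (inter_ev A I \<inter> A j)) (sorted_list_of_set ({1..n} - I)))) ! (s - 1)"

definition V_val :: "'a measure \<Rightarrow> (nat \<Rightarrow> 'a set) \<Rightarrow> nat \<Rightarrow> nat \<Rightarrow> real" where
  "V_val M A n k = (\<Sum>R\<in>{R. R \<subseteq> {1..n} \<and> card R = k}.
      \<Sum>s=1..n-k. W_val M A n R s * (real k / ((real k + real s) * (real k + real s - 1))))"

end

theory Submission
  imports Defs
begin

(* Write X for the number of events that occur. Pointwise,
   sum_{j=1..k} (-1)^(j+1) C(X,j) = [X >= 1] - (-1)^k C(X-1,k), so the alternating sum of the S_j
   equals P(X >= 1) - (-1)^k E[C(X-1,k)], and it remains to show V <= E[C(X-1,k)].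
   The weights c(s) = k/((k+s)(k+s-1)) telescope to sum_{s=1..t} c(s) = t/(k+t), hence
   C(m,k) sum_{s=1..m-k} c(s) = C(m-1,k) and E[C(X-1,k)] = sum_R E[1_{A_R} sum_{s=1..X-k} c(s)].
   For a fixed k-set R, let j outside R have rank s(j) among the values P(A_R A_j); then
   sum_s W_s(R) c(s) = E[1_{A_R} sum_{j not in R, A_j occurs} c(s(j))], and on A_R exactly
   X - k such j occur, so since c is decreasing the inner sum is at most sum_{s=1..X-k} c(s). *)

definition rank_weight :: "nat \<Rightarrow> nat \<Rightarrow> real" where
  "rank_weight k s = real k / ((real k + real s) * (real k + real s - 1))"

lemma rank_weight_Suc:
  assumes "1 \<le> k"
  shows "rank_weight k (Suc i) = real k / (real k + real i) - real k / (real k + real (Suc i))"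
proof -
  have "real k + real i > 0" using assms by simp
  then show ?thesis by (simp add: rank_weight_def field_simps)
qed

lemma sum_rank_weight:
  assumes "1 \<le> k"
  shows "(\<Sum>s=1..t. rank_weight k s) = real t / (real k + real t)"
proof -
  have "(\<Sum>s=1..t. rank_weight k s)
          = (\<Sum>i<t. real k / (real k + real i) - real k / (real k + real (Suc i)))"
    by (simp add: sum.atLeast1_atMost_eq rank_weight_Suc[OF assms])
  also have "\<dots> = 1 - real k / (real k + real t)"
    using assms by (subst sum_lessThan_telescope') simp
  also have "\<dots> = real t / (real k + real t)"
    using assms by (simp add: field_simps)
  finally show ?thesis .
qed

lemma rank_weight_antimono:
  assumes "1 \<le> k" "1 \<le> s" "s \<le> s'"
  shows "rank_weight k s' \<le> rank_weight k s"
  unfolding rank_weight_def using assms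
  by (intro divide_left_mono mult_mono mult_pos_pos) auto

lemma binomial_times_sum_rank_weight:
  assumes "1 \<le> k"
  shows "real (m choose k) * (\<Sum>s=1..m-k. rank_weight k s) = real ((m - 1) choose k)"
proof (cases "k \<le> m")
  case True
  then have "m \<noteq> 0" using assms by simp
  have absorb: "real (m choose k) * real (m - k) = real m * real ((m - 1) choose k)"
    using binomial_absorb_comp[of m k] by (metis of_nat_mult mult.commute)
  have "(\<Sum>s=1..m-k. rank_weight k s) = real (m - k) / real m"
    using True sum_rank_weight[OF assms, of "m - k"] by simp
  then have "real (m choose k) * (\<Sum>s=1..m-k. rank_weight k s)
               = real (m choose k) * real (m - k) / real m"
    by simp
  also have "\<dots> = real ((m - 1) choose k)"
    using \<open>m \<noteq> 0\<close> by (simp only: absorb) simp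
  finally show ?thesis .
qed simp

lemma sum_antimono_le_initial_segment:
  fixes c :: "nat \<Rightarrow> 'a::ordered_comm_monoid_add"
  assumes antimono: "\<And>i j. 1 \<le> i \<Longrightarrow> i \<le> j \<Longrightarrow> c j \<le> c i"
    and "finite S" "0 \<notin> S"
  shows "sum c S \<le> sum c {1..card S}"
  using assms(2,3)
proof (induction S rule: finite_linorder_max_induct)
  case (insert b S)
  have "S \<subseteq> {1..<b}" using insert.hyps(2) insert.prems by (auto simp: Suc_le_eq intro!: gr0I)
  then have "card S < b" using card_mono[of "{1..<b}" S] insert.prems by fastforce
  then have "c b \<le> c (Suc (card S))" by (intro antimono) auto
  moreover have "b \<notin> S" using insert.hyps(2) by blast
  ultimately have "sum c S + c b \<le> sum c {1..card S} + c (Suc (card S))"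
    using insert.IH insert.prems by (intro add_mono) auto
  with \<open>b \<notin> S\<close> show ?case
    using insert.hyps(1) by (simp add: add.commute)
qed simp

lemma alternating_sum_choose:
  assumes "1 \<le> k"
  shows "(\<Sum>j=1..k. (-1) ^ (j + 1) * of_nat (m choose j))
           = of_bool (1 \<le> m) - (-1) ^ k * (of_nat ((m - 1) choose k) :: 'a::comm_ring_1)"
proof (cases m)
  case 0
  then show ?thesis using assms by (auto intro!: sum.neutral simp: binomial_eq_0)
next
  case (Suc m')
  show ?thesis
    using assms
  proof (induction k rule: dec_induct)
    case (step k)
    then show ?case using Suc by (simp add: algebra_simps)
  qed (simp add: Suc)
qed

lemma mset_eq_map_positions:
  assumes "distinct xs" "mset ys = mset (map f xs)"
  obtains \<tau> where "bij_betw \<tau> (set xs) {1..length xs}"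
    and "\<And>x. x \<in> set xs \<Longrightarrow> ys ! (\<tau> x - 1) = f x"
proof -
  obtain \<pi> where \<pi>: "\<pi> permutes {..<length xs}" "permute_list \<pi> (map f xs) = ys"
    using mset_eq_permutation[OF assms(2)] by auto
  define \<sigma> where "\<sigma> i = xs ! \<pi> i" for i
  have \<sigma>: "bij_betw \<sigma> {..<length xs} (set xs)"
    unfolding \<sigma>_def
    using bij_betw_trans[OF permutes_imp_bij[OF \<pi>(1)] bij_betw_nth[OF assms(1) refl refl]]
    by (simp add: comp_def)
  define \<rho> where "\<rho> = inv_into {..<length xs} \<sigma>"
  show ?thesis
  proof
    show "bij_betw (Suc \<circ> \<rho>) (set xs) {1..length xs}"
      unfolding \<rho>_def
      by (rule bij_betw_trans[OF bij_betw_inv_into[OF \<sigma>]]) (simp add: image_Suc_lessThan)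
    fix x assume "x \<in> set xs"
    then have i: "\<rho> x < length xs" and "\<sigma> (\<rho> x) = x"
      unfolding \<rho>_def using bij_betwE[OF bij_betw_inv_into[OF \<sigma>]] bij_betw_inv_into_right[OF \<sigma>]
      by auto
    have "ys ! \<rho> x = map f xs ! \<pi> (\<rho> x)"
      using permute_list_nth[of \<pi> "map f xs"] \<pi> i by simp
    also have "\<dots> = f (\<sigma> (\<rho> x))"
      using permutes_in_image[OF \<pi>(1)] i by (simp add: \<sigma>_def)
    finally show "ys ! ((Suc \<circ> \<rho>) x - 1) = f x"
      using \<open>\<sigma> (\<rho> x) = x\<close> by simp
  qed
qed

lemma inter_ev_in_sets:
  assumes "finite J" "J \<noteq> {}" "\<forall>i\<in>J. A i \<in> sets M"
  shows "inter_ev A J \<in> sets M"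
  unfolding inter_ev_def using assms by (intro sets.finite_INT) auto

lemma measurable_card_occurring:
  fixes C :: "nat set"
  assumes "\<forall>i\<in>C. A i \<in> sets M"
  shows "(\<lambda>w. card {i\<in>C. w \<in> A i}) \<in> measurable M (count_space UNIV)"
proof (rule measurable_card[where S="\<lambda>w. {i\<in>C. w \<in> A i}"])
  fix i
  have "{w\<in>space M. i \<in> {i\<in>C. w \<in> A i}} = (if i \<in> C then A i else {})"
    using assms sets.sets_into_space by auto
  then show "{w\<in>space M. i \<in> {i\<in>C. w \<in> A i}} \<in> sets M"
    using assms by simp
qed

lemma integrable_fun_card_occurring:
  fixes g :: "nat \<Rightarrow> real" and C :: "nat set"
  assumes "finite_measure M" "finite C" "\<forall>i\<in>C. A i \<in> sets M"
  shows "integrable M (\<lambda>w. g (card {i\<in>C. w \<in> A i}))"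
proof -
  interpret finite_measure M by fact
  have "\<bar>g (card {i\<in>C. w \<in> A i})\<bar> \<le> (\<Sum>t\<le>card C. \<bar>g t\<bar>)" for w
    using assms(2) by (intro member_le_sum[of _ _ "\<lambda>t. \<bar>g t\<bar>"]) (auto intro: card_mono)
  then show ?thesis
    by (intro integrable_const_bound[where B="\<Sum>t\<le>card C. \<bar>g t\<bar>"] AE_I2
        measurable_compose[OF measurable_card_occurring[OF assms(3)]]) auto
qed

lemma sum_indicator_inter_ev:
  assumes "finite C" "1 \<le> j"
  shows "(\<Sum>J\<in>{J. J \<subseteq> C \<and> card J = j}. indicator (inter_ev A J) w :: real)
           = real (card {i\<in>C. w \<in> A i} choose j)"
proof -
  let ?T = "{i\<in>C. w \<in> A i}"
  let ?Js = "{J. J \<subseteq> C \<and> card J = j}"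
  have "finite ?Js" using assms(1) by simp
  have "(\<Sum>J\<in>?Js. indicator (inter_ev A J) w :: real) = (\<Sum>J\<in>?Js. of_bool (J \<subseteq> ?T))"
    by (intro sum.cong) (auto simp: inter_ev_def indicator_def)
  also have "\<dots> = real (card (?Js \<inter> {J. J \<subseteq> ?T}))"
    using \<open>finite ?Js\<close> by simp
  also have "?Js \<inter> {J. J \<subseteq> ?T} = {J. J \<subseteq> ?T \<and> card J = j}" by auto
  also have "card \<dots> = card ?T choose j"
    using assms(1) by (intro n_subsets) simp
  finally show ?thesis .
qed

lemma S_sum_eq_integral_choose:
  assumes "finite_measure M" "\<forall>i\<in>{1..n}. A i \<in> sets M" "1 \<le> j"
  shows "S_sum M A n j = (\<integral>w. real (num_occ A n w choose j) \<partial>M)"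
proof -
  interpret finite_measure M by fact
  let ?Js = "{J. J \<subseteq> {1..n} \<and> card J = j}"
  have sets: "inter_ev A J \<in> sets M" if "J \<in> ?Js" for J
    using that assms(2,3) by (intro inter_ev_in_sets) (auto intro: finite_subset)
  have "S_sum M A n j = (\<Sum>J\<in>?Js. \<integral>w. indicator (inter_ev A J) w \<partial>M)"
    unfolding S_sum_def using sets by (intro sum.cong) (auto simp: Int_absorb2 sets.sets_into_space)
  also have "\<dots> = (\<integral>w. (\<Sum>J\<in>?Js. indicator (inter_ev A J) w) \<partial>M)"
    using sets by (intro Bochner_Integration.integral_sum[symmetric]) (auto simp: less_top[symmetric])
  also have "\<dots> = (\<integral>w. real (num_occ A n w choose j) \<partial>M)"
    using assms(3) by (simp add: sum_indicator_inter_ev num_occ_def)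
  finally show ?thesis .
qed

lemma alternating_S_sum_eq:
  assumes "finite_measure M" "\<forall>i\<in>{1..n}. A i \<in> sets M" "1 \<le> k"
  shows "(\<Sum>j=1..k. (-1) ^ (j + 1) * S_sum M A n j)
           = measure M {w\<in>space M. num_occ A n w \<ge> 1}
             - (-1) ^ k * (\<integral>w. real ((num_occ A n w - 1) choose k) \<partial>M)"
proof -
  have integrable: "integrable M (\<lambda>w. g (num_occ A n w))" for g :: "nat \<Rightarrow> real"
    unfolding num_occ_def using assms(1,2) by (intro integrable_fun_card_occurring) auto
  have "(\<Sum>j=1..k. (-1) ^ (j + 1) * S_sum M A n j)
          = (\<Sum>j=1..k. \<integral>w. (-1) ^ (j + 1) * real (num_occ A n w choose j) \<partial>M)"
    using assms by (intro sum.cong) (simp_all add: S_sum_eq_integral_choose)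
  also have "\<dots> = (\<integral>w. (\<Sum>j=1..k. (-1) ^ (j + 1) * real (num_occ A n w choose j)) \<partial>M)"
    by (rule Bochner_Integration.integral_sum[symmetric]) (rule integrable)
  also have "\<dots> = (\<integral>w. of_bool (num_occ A n w \<ge> 1)
                           - (-1) ^ k * real ((num_occ A n w - 1) choose k) \<partial>M)"
    by (intro Bochner_Integration.integral_cong refl)
      (simp only: alternating_sum_choose[OF assms(3)])
  also have "\<dots> = (\<integral>w. of_bool (num_occ A n w \<ge> 1) \<partial>M)
                   - (-1) ^ k * (\<integral>w. real ((num_occ A n w - 1) choose k) \<partial>M)"
    using integrable[of "\<lambda>m. of_bool (1 \<le> m)"]
      integrable[of "\<lambda>m. (-1) ^ k * real ((m - 1) choose k)"]
    by simp
  also have "(\<integral>w. of_bool (num_occ A n w \<ge> 1) \<partial>M) = measure M {w\<in>space M. num_occ A n w \<ge> 1}"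
  proof -
    let ?X = "{w\<in>space M. num_occ A n w \<ge> 1}"
    have "(\<integral>w. of_bool (num_occ A n w \<ge> 1) \<partial>M) = (\<integral>w. indicator ?X w \<partial>M)"
      by (intro Bochner_Integration.integral_cong) (auto simp: indicator_def)
    also have "\<dots> = measure M (?X \<inter> space M)"
      by (rule Bochner_Integration.integral_indicator)
    also have "?X \<inter> space M = ?X" by blast
    finally show ?thesis .
  qed
  finally show ?thesis .
qed

lemma sum_measure_inter_weighted_le:
  fixes c :: "nat \<Rightarrow> real" and C :: "nat set"
  assumes "finite_measure M" "B \<in> sets M" "finite C" "\<forall>j\<in>C. A j \<in> sets M"
    and "inj_on \<tau> C" "0 \<notin> \<tau> ` C"
    and antimono: "\<And>i j. 1 \<le> i \<Longrightarrow> i \<le> j \<Longrightarrow> c j \<le> c i"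
  shows "(\<Sum>j\<in>C. measure M (B \<inter> A j) * c (\<tau> j))
           \<le> (\<integral>w. indicator B w * sum c {1..card {j\<in>C. w \<in> A j}} \<partial>M)"
proof -
  interpret finite_measure M by fact
  have sets: "B \<inter> A j \<in> sets M" if "j \<in> C" for j
    using that assms(2,4) by auto
  have "(\<Sum>j\<in>C. measure M (B \<inter> A j) * c (\<tau> j))
          = (\<integral>w. (\<Sum>j\<in>C. indicator (B \<inter> A j) w * c (\<tau> j)) \<partial>M)"
    using sets by (subst Bochner_Integration.integral_sum)
      (auto simp: Int_absorb2 sets.sets_into_space less_top[symmetric])
  also have "\<dots> \<le> (\<integral>w. indicator B w * sum c {1..card {j\<in>C. w \<in> A j}} \<partial>M)"
  proof (rule integral_mono)
    show "integrable M (\<lambda>w. \<Sum>j\<in>C. indicator (B \<inter> A j) w * c (\<tau> j))"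
      using sets by (intro Bochner_Integration.integrable_sum integrable_mult_left)
        (auto simp: less_top[symmetric])
    show "integrable M (\<lambda>w. indicator B w * sum c {1..card {j\<in>C. w \<in> A j}})"
      using integrable_mult_indicator[OF assms(2) integrable_fun_card_occurring[OF assms(1,3,4)]]
      by simp
    fix w
    let ?T = "{j\<in>C. w \<in> A j}"
    have "(\<Sum>j\<in>C. indicator (B \<inter> A j) w * c (\<tau> j)) = indicator B w * (\<Sum>j\<in>?T. c (\<tau> j))"
      using assms(3) by (cases "w \<in> B")
        (simp_all add: indicator_def sum.inter_filter sum.inter_restrict)
    also have "\<dots> = indicator B w * sum c (\<tau> ` ?T)"
      using inj_on_subset[OF assms(5)] by (simp add: sum.reindex)
    also have "\<dots> \<le> indicator B w * sum c {1..card ?T}"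
      using sum_antimono_le_initial_segment[where c=c and S="\<tau> ` ?T", OF antimono]
        assms(3,5,6)
      by (intro mult_left_mono) (auto simp: card_image inj_on_subset)
    finally show "(\<Sum>j\<in>C. indicator (B \<inter> A j) w * c (\<tau> j))
                    \<le> indicator B w * sum c {1..card ?T}" .
  qed
  finally show ?thesis .
qed

lemma sum_W_val_rank_weight_le:
  assumes "finite_measure M" "\<forall>i\<in>{1..n}. A i \<in> sets M"
    and "R \<subseteq> {1..n}" "card R = k" "1 \<le> k"
  shows "(\<Sum>s=1..n-k. W_val M A n R s * rank_weight k s)
           \<le> (\<integral>w. indicator (inter_ev A R) w * (\<Sum>s=1..num_occ A n w - k. rank_weight k s) \<partial>M)"
proof -
  define C where "C = {1..n} - R"
  define p where "p j = measure M (inter_ev A R \<inter> A j)" for j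
  let ?xs = "sorted_list_of_set C"
  have "finite R" using assms(3) finite_subset by blast
  have B: "inter_ev A R \<in> sets M"
    using assms \<open>finite R\<close> by (intro inter_ev_in_sets) auto
  have "length ?xs = n - k"
    using assms(3,4) \<open>finite R\<close> by (simp add: C_def card_Diff_subset)
  moreover have "W_val M A n R s = rev (sort (map p ?xs)) ! (s - 1)" for s
    unfolding W_val_def p_def C_def ..
  \<comment> \<open>\<tau> j is a rank of p j among the values W_val; the bound below holds for every
      enumeration.\<close>
  ultimately obtain \<tau> where \<tau>: "bij_betw \<tau> C {1..n-k}"
    "\<And>j. j \<in> C \<Longrightarrow> W_val M A n R (\<tau> j) = p j"
    using mset_eq_map_positions[of ?xs "rev (sort (map p ?xs))" p] by (auto simp: C_def)
  have "(\<Sum>s=1..n-k. W_val M A n R s * rank_weight k s)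
          = (\<Sum>j\<in>C. W_val M A n R (\<tau> j) * rank_weight k (\<tau> j))"
    by (rule sum.reindex_bij_betw[OF \<tau>(1), symmetric])
  also have "\<dots> = (\<Sum>j\<in>C. p j * rank_weight k (\<tau> j))"
    using \<tau>(2) by simp
  also have "\<dots> \<le> (\<integral>w. indicator (inter_ev A R) w
                        * sum (rank_weight k) {1..card {j\<in>C. w \<in> A j}} \<partial>M)"
    unfolding p_def
  proof (rule sum_measure_inter_weighted_le[OF assms(1) B])
    show "inj_on \<tau> C" "0 \<notin> \<tau> ` C"
      using \<tau>(1) by (auto simp: bij_betw_def)
  qed (use assms rank_weight_antimono in \<open>auto simp: C_def\<close>)
  also have "\<dots> = (\<integral>w. indicator (inter_ev A R) w
                        * (\<Sum>s=1..num_occ A n w - k. rank_weight k s) \<partial>M)"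
  proof (intro Bochner_Integration.integral_cong refl)
    fix w
    show "indicator (inter_ev A R) w * sum (rank_weight k) {1..card {j\<in>C. w \<in> A j}}
            = indicator (inter_ev A R) w * (\<Sum>s=1..num_occ A n w - k. rank_weight k s)"
    proof (cases "w \<in> inter_ev A R")
      case True
      then have "{j\<in>C. w \<in> A j} = {i\<in>{1..n}. w \<in> A i} - R" "R \<subseteq> {i\<in>{1..n}. w \<in> A i}"
        using assms(3) by (auto simp: C_def inter_ev_def)
      then have "card {j\<in>C. w \<in> A j} = num_occ A n w - k"
        using assms(4) \<open>finite R\<close> by (simp add: num_occ_def card_Diff_subset)
      then show ?thesis by simp
    qed simp
  qed
  finally show ?thesis .
qed

lemma V_val_le_integral_choose:
  assumes "finite_measure M" "\<forall>i\<in>{1..n}. A i \<in> sets M" "1 \<le> k"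
  shows "V_val M A n k \<le> (\<integral>w. real ((num_occ A n w - 1) choose k) \<partial>M)"
proof -
  interpret finite_measure M by fact
  let ?Rs = "{R. R \<subseteq> {1..n} \<and> card R = k}"
  let ?tail = "\<lambda>w. \<Sum>s=1..num_occ A n w - k. rank_weight k s"
  have sets: "inter_ev A R \<in> sets M" if "R \<in> ?Rs" for R
    using that assms(2,3) by (intro inter_ev_in_sets) (auto intro: finite_subset)
  have count: "(\<Sum>R\<in>?Rs. indicator (inter_ev A R) w) = real (num_occ A n w choose k)" for w
    unfolding num_occ_def by (rule sum_indicator_inter_ev[OF finite_atLeastAtMost assms(3)])
  have integrable: "integrable M ?tail"
    unfolding num_occ_def using assms(1,2) by (intro integrable_fun_card_occurring) auto
  have "V_val M A n k = (\<Sum>R\<in>?Rs. \<Sum>s=1..n-k. W_val M A n R s * rank_weight k s)"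
    unfolding V_val_def rank_weight_def ..
  also have "\<dots> \<le> (\<Sum>R\<in>?Rs. \<integral>w. indicator (inter_ev A R) w * ?tail w \<partial>M)"
    using assms by (intro sum_mono sum_W_val_rank_weight_le) auto
  also have "\<dots> = (\<integral>w. (\<Sum>R\<in>?Rs. indicator (inter_ev A R) w * ?tail w) \<partial>M)"
    using integrable_mult_indicator[OF sets integrable]
    by (intro Bochner_Integration.integral_sum[symmetric]) simp
  also have "\<dots> = (\<integral>w. real (num_occ A n w choose k) * ?tail w \<partial>M)"
    by (simp only: sum_distrib_right[symmetric] count)
  also have "\<dots> = (\<integral>w. real ((num_occ A n w - 1) choose k) \<partial>M)"
    by (simp only: binomial_times_sum_rank_weight[OF assms(3)])
  finally show ?thesis .
qed

theorem theorem5: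
  fixes M :: "'a measure" and A :: "nat \<Rightarrow> 'a set" and n k :: nat
  assumes "prob_space M"
    and "\<forall>i\<in>{1..n}. A i \<in> sets M"
    and "1 \<le> k" and "k < n"
  shows "(even k \<longrightarrow>
            measure M {w\<in>space M. num_occ A n w \<ge> 1}
              \<ge> (\<Sum>j=1..k. (-1) ^ (j + 1) * S_sum M A n j) + V_val M A n k)
       \<and> (odd k \<longrightarrow>
            measure M {w\<in>space M. num_occ A n w \<ge> 1}
              \<le> (\<Sum>j=1..k. (-1) ^ (j + 1) * S_sum M A n j) - V_val M A n k)"
proof -
  have M: "finite_measure M"
    using assms(1) by (rule prob_space.finite_measure)
  note alternating = alternating_S_sum_eq[OF M assms(2,3)]
  have "V_val M A n k \<le> (\<integral>w. real ((num_occ A n w - 1) choose k) \<partial>M)"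
    by (rule V_val_le_integral_choose[OF M assms(2,3)])
  then show ?thesis
    unfolding alternating by auto
qed

end
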